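(* Let $(X,<)$ be a linearly ordered set. (1) For all $u,v\in\beta X$: $$u\trianglelefteq v\iff \widetilde{\min}(u,v)=u\vee\widetilde{\min}(v,u)=u\iff\widetilde{\min}(u,v)=u\vee\widetilde{\min}(u,v)\ne\widetilde{\min}(v,u)$$ $$\iff\widetilde{\max}(u,v)=v\vee\widetilde{\max}(v,u)=v\iff\widetilde{\max}(u,v)=v\vee\widetilde{\max}(u,v)\ne\widetilde{\max}(v,u),$$ and $$u\equiv v\iff\widetilde{\min}(u,v)\ne\widetilde{\min}(v,u)\vee u=v\iff\widetilde{\max}(u,v)\ne\widetilde{\max}(v,u)\vee u=v.$$ (2) The equivalence $\equiv$ is a congruence of the skew lattice $(\beta X,\widetilde{\max},\widetilde{\min})$ and coincides with the relation $D$. (3) The quotient $\beta X/\!\equiv$ with the operations induced by $\widetilde{\min}$ and $\widetilde{\max}$ is isomorphic, via $[u]\mapsto\mathrm{supp}(u)$, to the lattice $(s(X),\min,\max)$. (4) For each $u\in\beta X$, the $\equiv$-class of $u$ is $\{u\}$ if $u$ is principal; if $u$ is non-principal with $I_u\in u$, it is a left-zero band for $\widetilde{\min}$ and a right-zero band for $\widetilde{\max}$; if $u$ is non-principal with $J_u\in u$, it is a right-zero band for $\widetilde{\min}$ and a left-zero band for $\widetilde{\max}$.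
   Context: $\beta X$ is the set of ultrafilters over $X$. For a binary relation $R$ on $X$, $u\,\tilde R\,v\iff\{x:\{y:x\,R\,y\}\in v\}\in u$; for a binary operation $F$ (here $\min,\max$), $S\in\tilde F(u,v)\iff\{x:\{y:F(x,y)\in S\}\in v\}\in u$. Define $u\trianglelefteq v\iff(u\,\tilde\le\,v\vee v\,\tilde\ge\,u)$ and $u\equiv v\iff(u\trianglelefteq v\wedge v\trianglelefteq u)$. $D$ is the relation on $\beta X$ given by $u\,D\,v\iff\widetilde{\min}(\widetilde{\min}(u,v),u)=u\wedge\widetilde{\min}(\widetilde{\min}(v,u),v)=v$. A set $B$ with binary operation $\cdot$ is a left-zero band if $xy=x$ for all $x,y\in B$, a right-zero band if $xy=y$ for all $x,y\in B$. $I_u=\bigcap\{I\in u:I\text{ initial segment}\}$, $J_u=\bigcap\{J\in u:J\text{ final segment}\}$. Supports: $\mathrm{supp}(\tilde x)=\{x\}$; for non-principal $u$ (exactly one of $I_u\in u$, $J_u\in u$ holds), $\mathrm{supp}(u)$ is $I_u$ regarded as a left half-cut if $I_u\in u$ and $J_u$ regarded as a right half-cut if $J_u\in u$; supports equal iff same kind and equal as sets. $s(X)$ is the set of all supports of ultrafilters over $X$, linearly ordered by: $\{x\}<\{y\}$ iff $x<y$; $\{x\}<I$ iff $x\in I$, $I<\{x\}$ iff $x\notin I$; $\{x\}<J$ iff $x\notin J$, $J<\{x\}$ iff $x\in J$; $I<I'$ iff $I\subsetneq I'$; $J<J'$ iff $J\supsetneq J'$; $I<J$ iff $I\cap J=\emptyset$,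 $J<I$ iff $I\cap J\neq\emptyset$; $\min,\max$ on $s(X)$ are taken with respect to this order. *)

theory Defs
  imports Main
begin

text \<open>The linearly ordered set X is the universe of a type 'a::linorder.
  Ultrafilters over X are represented as sets of subsets of X.\<close>

definition is_uf :: "'a set set \<Rightarrow> bool" where
  "is_uf U \<longleftrightarrow> UNIV \<in> U \<and> {} \<notin> U
     \<and> (\<forall>A B. A \<in> U \<and> B \<in> U \<longrightarrow> A \<inter> B \<in> U)
     \<and> (\<forall>A B. A \<in> U \<and> A \<subseteq> B \<longrightarrow> B \<in> U)
     \<and> (\<forall>A. A \<in> U \<or> - A \<in> U)"

definition betaX :: "'a set set set" where
  "betaX = {U. is_uf U}"

definition principal_uf :: "'a \<Rightarrow> 'a set set" where
  "principal_uf x = {A. x \<in> A}"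

definition is_principal :: "'a set set \<Rightarrow> bool" where
  "is_principal u \<longleftrightarrow> (\<exists>x. u = principal_uf x)"

definition rel_ext :: "('a \<Rightarrow> 'a \<Rightarrow> bool) \<Rightarrow> 'a set set \<Rightarrow> 'a set set \<Rightarrow> bool" where
  "rel_ext R u v \<longleftrightarrow> {x. {y. R x y} \<in> v} \<in> u"

definition op_ext :: "('a \<Rightarrow> 'a \<Rightarrow> 'a) \<Rightarrow> 'a set set \<Rightarrow> 'a set set \<Rightarrow> 'a set set" where
  "op_ext F u v = {S. {x. {y. F x y \<in> S} \<in> v} \<in> u}"

abbreviation umin :: "'a::linorder set set \<Rightarrow> 'a set set \<Rightarrow> 'a set set" where
  "umin \<equiv> op_ext min"

abbreviation umax :: "'a::linorder set set \<Rightarrow> 'a set set \<Rightarrow> 'a set set" where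
  "umax \<equiv> op_ext max"

definition tri :: "'a::linorder set set \<Rightarrow> 'a set set \<Rightarrow> bool" where
  "tri u v \<longleftrightarrow> rel_ext (\<le>) u v \<or> rel_ext (\<ge>) v u"

definition ueq :: "'a::linorder set set \<Rightarrow> 'a set set \<Rightarrow> bool" where
  "ueq u v \<longleftrightarrow> tri u v \<and> tri v u"

definition relD :: "'a::linorder set set \<Rightarrow> 'a set set \<Rightarrow> bool" where
  "relD u v \<longleftrightarrow> umin (umin u v) u = u \<and> umin (umin v u) v = v"

definition is_congruence ::
  "'b set \<Rightarrow> ('b \<Rightarrow> 'b \<Rightarrow> 'b) \<Rightarrow> ('b \<Rightarrow> 'b \<Rightarrow> 'b) \<Rightarrow> ('b \<Rightarrow> 'b \<Rightarrow> bool) \<Rightarrow> bool" where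
  "is_congruence B f g R \<longleftrightarrow>
     (\<forall>x\<in>B. R x x) \<and> (\<forall>x\<in>B. \<forall>y\<in>B. R x y \<longrightarrow> R y x)
     \<and> (\<forall>x\<in>B. \<forall>y\<in>B. \<forall>z\<in>B. R x y \<and> R y z \<longrightarrow> R x z)
     \<and> (\<forall>x\<in>B. \<forall>x'\<in>B. \<forall>y\<in>B. \<forall>y'\<in>B. R x x' \<and> R y y' \<longrightarrow>
           R (f x y) (f x' y') \<and> R (g x y) (g x' y'))"

definition left_zero_band :: "'b set \<Rightarrow> ('b \<Rightarrow> 'b \<Rightarrow> 'b) \<Rightarrow> bool" where
  "left_zero_band B f \<longleftrightarrow> (\<forall>x\<in>B. \<forall>y\<in>B. f x y = x)"

definition right_zero_band :: "'b set \<Rightarrow> ('b \<Rightarrow> 'b \<Rightarrow> 'b) \<Rightarrow> bool" where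
  "right_zero_band B f \<longleftrightarrow> (\<forall>x\<in>B. \<forall>y\<in>B. f x y = y)"

definition initial_seg :: "'a::linorder set \<Rightarrow> bool" where
  "initial_seg I \<longleftrightarrow> (\<forall>x y. y \<in> I \<and> x \<le> y \<longrightarrow> x \<in> I)"

definition final_seg :: "'a::linorder set \<Rightarrow> bool" where
  "final_seg J \<longleftrightarrow> (\<forall>x y. y \<in> J \<and> y \<le> x \<longrightarrow> x \<in> J)"

definition I_u :: "'a::linorder set set \<Rightarrow> 'a set" where
  "I_u u = \<Inter> {I \<in> u. initial_seg I}"

definition J_u :: "'a::linorder set set \<Rightarrow> 'a set" where
  "J_u u = \<Inter> {J \<in> u. final_seg J}"

text \<open>Supports: a point, a left half-cut (given by an initial segment),
  or a right half-cut (given by a final segment).\<close>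
datatype 'a support = Pt 'a | LCut "'a set" | RCut "'a set"

definition supp :: "'a::linorder set set \<Rightarrow> 'a support" where
  "supp u = (if is_principal u then Pt (THE x. u = principal_uf x)
             else if I_u u \<in> u then LCut (I_u u) else RCut (J_u u))"

definition sX :: "'a::linorder support set" where
  "sX = supp ` betaX"

fun supp_less :: "'a::linorder support \<Rightarrow> 'a support \<Rightarrow> bool" where
  "supp_less (Pt x) (Pt y) \<longleftrightarrow> x < y"
| "supp_less (Pt x) (LCut I) \<longleftrightarrow> x \<in> I"
| "supp_less (LCut I) (Pt x) \<longleftrightarrow> x \<notin> I"
| "supp_less (Pt x) (RCut J) \<longleftrightarrow> x \<notin> J"
| "supp_less (RCut J) (Pt x) \<longleftrightarrow> x \<in> J"
| "supp_less (LCut I) (LCut I') \<longleftrightarrow> I \<subset> I'"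
| "supp_less (RCut J) (RCut J') \<longleftrightarrow> J' \<subset> J"
| "supp_less (LCut I) (RCut J) \<longleftrightarrow> I \<inter> J = {}"
| "supp_less (RCut J) (LCut I) \<longleftrightarrow> I \<inter> J \<noteq> {}"

definition supp_le :: "'a::linorder support \<Rightarrow> 'a support \<Rightarrow> bool" where
  "supp_le a b \<longleftrightarrow> a = b \<or> supp_less a b"

definition smin :: "'a::linorder support \<Rightarrow> 'a support \<Rightarrow> 'a support" where
  "smin a b = (if supp_le a b then a else b)"

definition smax :: "'a::linorder support \<Rightarrow> 'a support \<Rightarrow> 'a support" where
  "smax a b = (if supp_le a b then b else a)"

end

theory Submission
  imports Defs
begin

text \<open>An ultrafilter u determines the cut lower_cut u = {x. (x,\<infinity>) \<in> u}; together with the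
  side of the cut on which u concentrates (or the point, if u is principal) this is supp u.
  Two ultrafilters either have the same support, or one of them contains a set lying entirely
  below a set of the other. In the second case the extended min and max simply pick the lower
  and the upper ultrafilter, just as min and max of the supports do. In the first case they are
  projections: for a left half-cut every set of u lies below v-almost all points, so min picks
  the left and max the right argument, and symmetrically for a right half-cut.\<close>

lemma mem_betaX: "u \<in> betaX \<longleftrightarrow> is_uf u"
  by (simp add: betaX_def)

lemma uf_UNIV: "is_uf u \<Longrightarrow> UNIV \<in> u"
  by (simp add: is_uf_def)

lemma uf_empty: "is_uf u \<Longrightarrow> {} \<notin> u"
  by (simp add: is_uf_def)

lemma uf_mono: "is_uf u \<Longrightarrow> A \<in> u \<Longrightarrow> A \<subseteq> B \<Longrightarrow> B \<in> u"
  unfolding is_uf_def by blast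

lemma uf_Int_iff: "is_uf u \<Longrightarrow> A \<inter> B \<in> u \<longleftrightarrow> A \<in> u \<and> B \<in> u"
  unfolding is_uf_def by (meson Int_lower1 Int_lower2)

lemma uf_disjoint: "is_uf u \<Longrightarrow> A \<in> u \<Longrightarrow> A \<inter> B = {} \<Longrightarrow> B \<notin> u"
  by (metis uf_Int_iff uf_empty)

lemma uf_nonempty: "is_uf u \<Longrightarrow> A \<in> u \<Longrightarrow> \<exists>x. x \<in> A"
  using uf_empty[of u] by (auto simp: ex_in_conv)

lemma uf_Compl_iff: "is_uf u \<Longrightarrow> - A \<in> u \<longleftrightarrow> A \<notin> u"
  by (metis Compl_disjoint is_uf_def uf_disjoint)

lemma uf_agree: "is_uf u \<Longrightarrow> A \<in> u \<Longrightarrow> S \<inter> A = T \<inter> A \<Longrightarrow> S \<in> u \<longleftrightarrow> T \<in> u"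
  by (metis uf_Int_iff)

lemma is_uf_principal: "is_uf (principal_uf x)"
  unfolding is_uf_def principal_uf_def by auto

lemma principal_uf_inject: "principal_uf x = principal_uf y \<longleftrightarrow> x = y"
proof
  assume "principal_uf x = principal_uf y"
  moreover have "{x} \<in> principal_uf x" by (simp add: principal_uf_def)
  ultimately show "x = y" by (simp add: principal_uf_def)
qed simp

lemma uf_eq_principal:
  assumes u: "is_uf u" and x: "{x} \<in> u"
  shows "u = principal_uf x"
proof (intro set_eqI iffI)
  show "A \<in> principal_uf x" if "A \<in> u" for A
    using uf_disjoint[OF u that, of "{x}"] x by (auto simp: principal_uf_def)
  show "A \<in> u" if "A \<in> principal_uf x" for A
    using uf_mono[OF u x, of A] that by (simp add: principal_uf_def)
qed

lemma singleton_notin_nonprincipal: "is_uf u \<Longrightarrow> \<not> is_principal u \<Longrightarrow> {x} \<notin> u"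
  unfolding is_principal_def using uf_eq_principal by metis

lemma is_uf_op_ext:
  assumes u: "is_uf u" and v: "is_uf v"
  shows "is_uf (op_ext F u v)"
proof -
  define G where "G S = {x. {y. F x y \<in> S} \<in> v}" for S
  have op_ext_G: "op_ext F u v = {S. G S \<in> u}"
    by (simp add: op_ext_def G_def)
  have compl: "G (- S) = - G S" for S
  proof -
    have "{y. F x y \<in> - S} = - {y. F x y \<in> S}" for x by auto
    then show ?thesis by (simp add: G_def uf_Compl_iff[OF v] Collect_neg_eq)
  qed
  have inter: "G (S \<inter> T) = G S \<inter> G T" for S T
  proof -
    have "{y. F x y \<in> S \<inter> T} = {y. F x y \<in> S} \<inter> {y. F x y \<in> T}" for x by auto
    then show ?thesis by (simp add: G_def uf_Int_iff[OF v] Collect_conj_eq)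
  qed
  have mono: "G S \<subseteq> G T" if "S \<subseteq> T" for S T
  proof
    fix x assume "x \<in> G S"
    moreover have "{y. F x y \<in> S} \<subseteq> {y. F x y \<in> T}" using that by auto
    ultimately show "x \<in> G T" using uf_mono[OF v] by (auto simp: G_def)
  qed
  have "G UNIV = UNIV" "G {} = {}"
    using uf_UNIV[OF v] uf_empty[OF v] by (simp_all add: G_def)
  with uf_UNIV[OF u] uf_empty[OF u] show ?thesis
    unfolding op_ext_G is_uf_def mem_Collect_eq
  proof (intro conjI allI impI)
    fix A B
    show "G A \<in> u \<and> G B \<in> u \<Longrightarrow> G (A \<inter> B) \<in> u"
      using inter uf_Int_iff[OF u] by simp
    show "G A \<in> u \<and> A \<subseteq> B \<Longrightarrow> G B \<in> u"
      using mono uf_mono[OF u] by meson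
    show "G A \<in> u \<or> G (- A) \<in> u"
      using compl uf_Compl_iff[OF u] by simp
  qed simp_all
qed

lemma op_ext_principal: "op_ext F (principal_uf x) (principal_uf y) = principal_uf (F x y)"
  by (simp add: op_ext_def principal_uf_def)

lemma op_ext_eq_left:
  assumes u: "is_uf u" and v: "is_uf v" and A: "A \<in> u"
    and B: "\<And>x. x \<in> A \<Longrightarrow> B x \<in> v" and absorb: "\<And>x y. x \<in> A \<Longrightarrow> y \<in> B x \<Longrightarrow> F x y = x"
  shows "op_ext F u v = u"
proof (rule set_eqI)
  fix S
  have "{y. F x y \<in> S} \<in> v \<longleftrightarrow> x \<in> S" if x: "x \<in> A" for x
  proof -
    have "{y. F x y \<in> S} \<inter> B x = (if x \<in> S then UNIV else {}) \<inter> B x"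
      using absorb[OF x] by auto
    from uf_agree[OF v B[OF x] this] show ?thesis
      using uf_UNIV[OF v] uf_empty[OF v] by simp
  qed
  then have "{x. {y. F x y \<in> S} \<in> v} \<inter> A = S \<inter> A" by blast
  from uf_agree[OF u A this] show "S \<in> op_ext F u v \<longleftrightarrow> S \<in> u"
    by (simp add: op_ext_def)
qed

lemma op_ext_eq_right:
  assumes u: "is_uf u" and v: "is_uf v" and A: "A \<in> u"
    and B: "\<And>x. x \<in> A \<Longrightarrow> B x \<in> v" and absorb: "\<And>x y. x \<in> A \<Longrightarrow> y \<in> B x \<Longrightarrow> F x y = y"
  shows "op_ext F u v = v"
proof (rule set_eqI)
  fix S
  have "{y. F x y \<in> S} \<in> v \<longleftrightarrow> S \<in> v" if x: "x \<in> A" for x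
  proof -
    have "{y. F x y \<in> S} \<inter> B x = S \<inter> B x"
      using absorb[OF x] by auto
    from uf_agree[OF v B[OF x] this] show ?thesis .
  qed
  then have "{x. {y. F x y \<in> S} \<in> v} \<inter> A = (if S \<in> v then UNIV else {}) \<inter> A" by auto
  from uf_agree[OF u A this] show "S \<in> op_ext F u v \<longleftrightarrow> S \<in> v"
    using uf_UNIV[OF u] uf_empty[OF u] by (simp add: op_ext_def)
qed

definition lower_cut :: "'a::linorder set set \<Rightarrow> 'a set" where
  "lower_cut u = {x. {x<..} \<in> u}"

lemma lower_cut_downward: "is_uf u \<Longrightarrow> y \<in> lower_cut u \<Longrightarrow> x \<le> y \<Longrightarrow> x \<in> lower_cut u"
proof -
  assume u: "is_uf u" and y: "y \<in> lower_cut u" and xy: "x \<le> y"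
  have "{y<..} \<subseteq> {x<..}" using xy by auto
  with y show ?thesis using uf_mono[OF u] by (auto simp: lower_cut_def)
qed

lemma lower_cut_less: "is_uf u \<Longrightarrow> a \<in> lower_cut u \<Longrightarrow> b \<notin> lower_cut u \<Longrightarrow> a < b"
  using lower_cut_downward not_less by blast

lemma atMost_in_uf: "is_uf u \<Longrightarrow> z \<notin> lower_cut u \<Longrightarrow> {..z} \<in> u"
  using uf_Compl_iff[of u "{z<..}"] by (simp add: lower_cut_def not_less atMost_def)

lemma lessThan_in_nonprincipal:
  assumes u: "is_uf u" and np: "\<not> is_principal u" and z: "z \<notin> lower_cut u"
  shows "{..<z} \<in> u"
proof -
  have "{..z} \<inter> - {z} \<in> u"
    using atMost_in_uf[OF u z] singleton_notin_nonprincipal[OF u np] uf_Compl_iff[OF u] uf_Int_iff[OF u]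
    by blast
  moreover have "{..z} \<inter> - {z} = {..<z}" by auto
  ultimately show ?thesis by simp
qed

lemma lower_cut_principal: "lower_cut (principal_uf x) = {..<x}"
  by (auto simp: lower_cut_def principal_uf_def)

lemma principal_if_compl_lower_cut:
  assumes v: "is_uf v" and cut: "lower_cut v = lower_cut (principal_uf x)"
    and compl: "- lower_cut v \<in> v"
  shows "v = principal_uf x"
proof -
  have "x \<notin> lower_cut v" using cut by (simp add: lower_cut_principal)
  then have "{..x} \<inter> - lower_cut v \<in> v"
    using atMost_in_uf[OF v] compl uf_Int_iff[OF v] by blast
  moreover have "{..x} \<inter> - lower_cut v = {x}" unfolding cut lower_cut_principal by auto
  ultimately show ?thesis using uf_eq_principal[OF v] by simp
qed

lemma I_u_nonprincipal:
  assumes u: "is_uf u" and np: "\<not> is_principal u"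
  shows "I_u u = lower_cut u"
proof (intro set_eqI iffI)
  fix z assume z: "z \<in> I_u u"
  have "initial_seg {..<z}" by (auto simp: initial_seg_def)
  then show "z \<in> lower_cut u"
    using z lessThan_in_nonprincipal[OF u np, of z] by (auto simp: I_u_def)
next
  fix z assume z: "z \<in> lower_cut u"
  show "z \<in> I_u u" unfolding I_u_def
  proof (rule InterI)
    fix I assume "I \<in> {I \<in> u. initial_seg I}"
    then have "I \<inter> {z<..} \<in> u" "initial_seg I"
      using z uf_Int_iff[OF u] by (auto simp: lower_cut_def)
    moreover obtain y where "y \<in> I" "z < y"
      using uf_nonempty[OF u \<open>I \<inter> {z<..} \<in> u\<close>] by auto
    ultimately show "z \<in> I" unfolding initial_seg_def by (blast intro: less_imp_le)
  qed
qed

lemma J_u_nonprincipal: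
  assumes u: "is_uf u" and np: "\<not> is_principal u"
  shows "J_u u = - lower_cut u"
proof (intro set_eqI iffI)
  fix z assume z: "z \<in> J_u u"
  have "final_seg {z<..}" by (auto simp: final_seg_def)
  then show "z \<in> - lower_cut u"
    using z by (auto simp: J_u_def lower_cut_def)
next
  fix z assume z: "z \<in> - lower_cut u"
  show "z \<in> J_u u" unfolding J_u_def
  proof (rule InterI)
    fix J assume "J \<in> {J \<in> u. final_seg J}"
    then have "J \<inter> {..<z} \<in> u" "final_seg J"
      using z lessThan_in_nonprincipal[OF u np] uf_Int_iff[OF u] by auto
    moreover obtain y where "y \<in> J" "y < z"
      using uf_nonempty[OF u \<open>J \<inter> {..<z} \<in> u\<close>] by auto
    ultimately show "z \<in> J" unfolding final_seg_def by (blast intro: less_imp_le)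
  qed
qed

lemma supp_if_J_u_mem:
  assumes u: "is_uf u" and np: "\<not> is_principal u" and J: "J_u u \<in> u"
  shows "supp u = RCut (J_u u)"
proof -
  have "I_u u \<notin> u"
    using J uf_Compl_iff[OF u] by (simp add: I_u_nonprincipal[OF u np] J_u_nonprincipal[OF u np])
  then show ?thesis using np by (simp add: supp_def)
qed

lemma supp_principal: "supp (principal_uf x) = Pt x"
  by (auto simp: supp_def is_principal_def principal_uf_inject)

lemma supp_cases [consumes 1, case_names point left right]:
  assumes u: "is_uf u"
  obtains (point) x where "u = principal_uf x" "supp u = Pt x"
  | (left) "\<not> is_principal u" "lower_cut u \<in> u" "supp u = LCut (lower_cut u)"
  | (right) "\<not> is_principal u" "- lower_cut u \<in> u" "supp u = RCut (- lower_cut u)"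
proof (cases "is_principal u")
  case True
  then show ?thesis using point supp_principal by (auto simp: is_principal_def)
next
  case False
  then show ?thesis
    using left right uf_Compl_iff[OF u] I_u_nonprincipal[OF u] J_u_nonprincipal[OF u]
    by (auto simp: supp_def)
qed

lemma supp_eq_Pt: "is_uf u \<Longrightarrow> supp u = Pt x \<Longrightarrow> u = principal_uf x"
  by (cases rule: supp_cases) auto

lemma supp_eq_LCut:
  "is_uf u \<Longrightarrow> supp u = LCut I \<Longrightarrow> \<not> is_principal u \<and> lower_cut u \<in> u \<and> I = lower_cut u"
  by (cases rule: supp_cases) auto

lemma supp_eq_RCut:
  "is_uf u \<Longrightarrow> supp u = RCut J \<Longrightarrow> \<not> is_principal u \<and> - lower_cut u \<in> u \<and> J = - lower_cut u"
  by (cases rule: supp_cases) auto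

definition separated :: "'a::linorder set set \<Rightarrow> 'a set set \<Rightarrow> bool" where
  "separated u v \<longleftrightarrow> (\<exists>A\<in>u. \<exists>B\<in>v. \<forall>a\<in>A. \<forall>b\<in>B. a < b)"

lemma separated_ops:
  assumes u: "is_uf u" and v: "is_uf v" and sep: "separated u v"
  shows "umin u v = u" "umin v u = u" "umax u v = v" "umax v u = v"
proof -
  obtain A B where A: "A \<in> u" and B: "B \<in> v" and less: "\<forall>a\<in>A. \<forall>b\<in>B. a < b"
    using sep by (auto simp: separated_def)
  have le: "a \<le> b" if "a \<in> A" "b \<in> B" for a b
    using less that by (simp add: less_imp_le)
  show "umin u v = u" by (rule op_ext_eq_left[OF u v A B]) (simp add: le min_absorb1)
  show "umin v u = u" by (rule op_ext_eq_right[OF v u B A]) (simp add: le min_absorb2)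
  show "umax u v = v" by (rule op_ext_eq_right[OF u v A B]) (simp add: le max_absorb2)
  show "umax v u = v" by (rule op_ext_eq_left[OF v u B A]) (simp add: le max_absorb1)
qed

lemma separated_tri:
  assumes u: "is_uf u" and v: "is_uf v" and sep: "separated u v"
  shows "tri u v" "\<not> tri v u"
proof -
  obtain A B where A: "A \<in> u" and B: "B \<in> v" and less: "\<forall>a\<in>A. \<forall>b\<in>B. a < b"
    using sep by (auto simp: separated_def)
  have "{y. a \<le> y} \<in> v" if "a \<in> A" for a
    using that less by (intro uf_mono[OF v B]) (auto intro: less_imp_le)
  then have "A \<subseteq> {x. {y. x \<le> y} \<in> v}" by blast
  then show "tri u v"
    using uf_mono[OF u A] by (auto simp: tri_def rel_ext_def)
  have "{y. b \<le> y} \<notin> u" if "b \<in> B" for b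
    using that less by (intro uf_disjoint[OF u A]) (auto simp: not_less[symmetric])
  then have "B \<inter> {x. {y. x \<le> y} \<in> u} = {}" by blast
  moreover have "{y. y \<le> a} \<notin> v" if "a \<in> A" for a
    using that less by (intro uf_disjoint[OF v B]) (auto simp: not_less[symmetric])
  then have "A \<inter> {x. {y. y \<le> x} \<in> v} = {}" by blast
  ultimately show "\<not> tri v u"
    using uf_disjoint[OF u A] uf_disjoint[OF v B] by (auto simp: tri_def rel_ext_def)
qed

lemma separated_if_lower_cut:
  assumes u: "is_uf u" and v: "is_uf v" and zu: "z \<notin> lower_cut u" and zv: "z \<in> lower_cut v"
  shows "separated u v"
proof -
  have "{..z} \<in> u" "{z<..} \<in> v" "\<forall>a\<in>{..z}. \<forall>b\<in>{z<..}. a < b"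
    using atMost_in_uf[OF u zu] zv by (auto simp: lower_cut_def)
  then show ?thesis unfolding separated_def by blast
qed

lemma separated_by_lower_cut:
  assumes u: "is_uf u" and "lower_cut u \<in> u" and "- lower_cut u \<in> v"
  shows "separated u v"
  using assms lower_cut_less[OF u] unfolding separated_def by (metis ComplD)

lemma separated_supp_less:
  assumes u: "is_uf u" and v: "is_uf v" and sep: "separated u v"
  shows "supp_less (supp u) (supp v)"
proof -
  obtain A B where A: "A \<in> u" and B: "B \<in> v" and less: "\<forall>a\<in>A. \<forall>b\<in>B. a < b"
    using sep by (auto simp: separated_def)
  have A_cut: "A \<subseteq> lower_cut v"
  proof
    fix a assume "a \<in> A"
    then have "B \<subseteq> {a<..}" using less by auto
    then show "a \<in> lower_cut v" using uf_mono[OF v B] by (simp add: lower_cut_def)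
  qed
  have B_cut: "B \<inter> lower_cut u = {}"
  proof (rule ccontr)
    assume "B \<inter> lower_cut u \<noteq> {}"
    then obtain b where b: "b \<in> B" "{b<..} \<in> u" by (auto simp: lower_cut_def)
    then obtain a where "a \<in> A" "b < a"
      using uf_nonempty[OF u] uf_Int_iff[OF u] A by (metis IntE greaterThan_iff)
    then show False using less b(1) by force
  qed
  have cut_mono: "lower_cut u \<subseteq> lower_cut v"
  proof
    fix w assume "w \<in> lower_cut u"
    then obtain a where "a \<in> A" "w < a"
      using uf_nonempty[OF u] uf_Int_iff[OF u] A by (metis IntE greaterThan_iff lower_cut_def mem_Collect_eq)
    then show "w \<in> lower_cut v" using A_cut lower_cut_downward[OF v] by (meson less_imp_le subsetD)
  qed
  have gap: "\<exists>z. z \<in> lower_cut v \<and> z \<notin> lower_cut u"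
    if "lower_cut v \<in> v \<or> - lower_cut u \<in> u"
    using that uf_nonempty[OF v, of "B \<inter> lower_cut v"] uf_nonempty[OF u, of "A \<inter> - lower_cut u"]
      uf_Int_iff[OF u] uf_Int_iff[OF v] A B A_cut B_cut by blast
  have "x \<in> A" if "u = principal_uf x" for x
    using A that by (simp add: principal_uf_def)
  moreover have "y \<in> B" if "v = principal_uf y" for y
    using B that by (simp add: principal_uf_def)
  ultimately show ?thesis
    using less A_cut B_cut cut_mono gap
    by (cases rule: supp_cases[OF u]; cases rule: supp_cases[OF v]) (auto simp: principal_uf_inject)
qed

lemma supp_if_lower_cut_mem:
  assumes u: "is_uf u" and cut: "lower_cut u \<in> u"
  shows "supp u = LCut (lower_cut u)"
  using u
proof (cases rule: supp_cases)
  case right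
  then show ?thesis using cut uf_Compl_iff[OF u] by blast
next
  case (point x)
  then show ?thesis using cut by (simp add: lower_cut_principal) (simp add: principal_uf_def)
qed

lemma supp_eq_if_compl_lower_cut_mem:
  assumes u: "is_uf u" and v: "is_uf v" and cut: "lower_cut u = lower_cut v"
    and compl_u: "- lower_cut u \<in> u" and compl_v: "- lower_cut v \<in> v"
  shows "supp u = supp v"
  using u
proof (cases rule: supp_cases)
  case (point x)
  then have "v = principal_uf x"
    using principal_if_compl_lower_cut[OF v _ compl_v] cut by simp
  then show ?thesis using point by simp
next
  case left
  then show ?thesis using compl_u uf_Compl_iff[OF u] by blast
next
  case right
  from v show ?thesis
  proof (cases rule: supp_cases)
    case (point y)
    then have "u = principal_uf y"
      using principal_if_compl_lower_cut[OF u _ compl_u] cut by simp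
    then show ?thesis using right(1) by (auto simp: is_principal_def)
  next
    case left
    then show ?thesis using compl_v uf_Compl_iff[OF v] by blast
  next
    case right
    then show ?thesis using \<open>supp u = RCut (- lower_cut u)\<close> cut by simp
  qed
qed

lemma uf_trichotomy [consumes 2, case_names below same above]:
  assumes u: "is_uf u" and v: "is_uf v"
  obtains (below) "separated u v" | (same) "supp u = supp v" | (above) "separated v u"
proof (cases "lower_cut u = lower_cut v")
  case False
  then obtain z where "z \<notin> lower_cut u \<and> z \<in> lower_cut v \<or> z \<notin> lower_cut v \<and> z \<in> lower_cut u"
    by blast
  then show ?thesis using separated_if_lower_cut u v below above by blast
next
  case True
  consider "lower_cut u \<in> u" "lower_cut u \<in> v" | "lower_cut u \<in> u" "- lower_cut u \<in> v"
    | "- lower_cut u \<in> u" "lower_cut u \<in> v" | "- lower_cut u \<in> u" "- lower_cut u \<in> v"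
    using uf_Compl_iff[OF u, of "lower_cut u"] uf_Compl_iff[OF v, of "lower_cut u"] by blast
  then show ?thesis
  proof cases
    case 1
    then show ?thesis using supp_if_lower_cut_mem[OF u] supp_if_lower_cut_mem[OF v] True same by simp
  next
    case 2
    then show ?thesis using separated_by_lower_cut[OF u] below by blast
  next
    case 3
    then show ?thesis using separated_by_lower_cut[OF v] True above by simp
  next
    case 4
    then show ?thesis using supp_eq_if_compl_lower_cut_mem[OF u v True] True same by simp
  qed
qed

lemma same_LCut_ops:
  assumes u: "is_uf u" and v: "is_uf v" and su: "supp u = LCut I" and sv: "supp v = LCut I"
  shows "umin u v = u" "umax u v = v" "tri u v"
proof -
  have cut_u: "lower_cut u \<in> u" and cut: "lower_cut u = lower_cut v"
    using supp_eq_LCut[OF u su] supp_eq_LCut[OF v sv] by auto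
  have above: "{x<..} \<in> v" if "x \<in> lower_cut u" for x
    using that unfolding cut by (simp add: lower_cut_def)
  show "umin u v = u" by (rule op_ext_eq_left[OF u v cut_u above]) (auto simp: min_def)
  show "umax u v = v" by (rule op_ext_eq_right[OF u v cut_u above]) (auto simp: max_def)
  have "{y. x \<le> y} \<in> v" if "x \<in> lower_cut u" for x
    by (rule uf_mono[OF v above[OF that]]) auto
  then have "lower_cut u \<subseteq> {x. {y. x \<le> y} \<in> v}" by blast
  then show "tri u v" using uf_mono[OF u cut_u] by (auto simp: tri_def rel_ext_def)
qed

lemma same_RCut_ops:
  assumes u: "is_uf u" and v: "is_uf v" and su: "supp u = RCut J" and sv: "supp v = RCut J"
  shows "umin u v = v" "umax u v = u" "tri u v"
proof -
  have compl_u: "- lower_cut u \<in> u" and compl_v: "- lower_cut v \<in> v"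
    and cut: "lower_cut u = lower_cut v" and np: "\<not> is_principal v"
    using supp_eq_RCut[OF u su] supp_eq_RCut[OF v sv] by auto
  have below: "{..<x} \<in> v" if "x \<in> - lower_cut u" for x
    using that cut lessThan_in_nonprincipal[OF v np] by simp
  show "umin u v = v" by (rule op_ext_eq_right[OF u v compl_u below]) (auto simp: min_def)
  show "umax u v = u" by (rule op_ext_eq_left[OF u v compl_u below]) (auto simp: max_def)
  have "- lower_cut v \<subseteq> {x. {y. x \<ge> y} \<in> u}"
    using atMost_in_uf[OF u] cut by (auto simp: atMost_def)
  then show "tri u v" using uf_mono[OF v compl_v] by (auto simp: tri_def rel_ext_def)
qed

lemma principal_ops:
  "umin (principal_uf x) (principal_uf x) = principal_uf x"
  "umax (principal_uf x) (principal_uf x) = principal_uf x"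
  "tri (principal_uf x) (principal_uf x)"
  by (simp_all only: op_ext_principal min.idem max.idem)
    (simp add: tri_def rel_ext_def principal_uf_def)

lemma idem_umin_umax_tri:
  assumes u: "is_uf u"
  shows "umin u u = u \<and> umax u u = u \<and> tri u u"
  using u by (cases rule: supp_cases)
    (simp_all add: principal_ops same_LCut_ops[OF u u] same_RCut_ops[OF u u])

lemma same_supp_cases:
  assumes u: "is_uf u" and v: "is_uf v" and eq: "supp u = supp v"
  obtains (left) "umin u v = u" "umax u v = v" "umin v u = v" "umax v u = u"
  | (right) "umin u v = v" "umax u v = u" "umin v u = u" "umax v u = v"
  using u
proof (cases rule: supp_cases)
  case (point x)
  then have "v = u" using supp_eq_Pt[OF v] eq by simp
  then show ?thesis using left idem_umin_umax_tri[OF u] by simp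
next
  case left
  then show ?thesis using that(1) same_LCut_ops[OF u v] same_LCut_ops[OF v u] eq by simp
next
  case right
  then show ?thesis using that(2) same_RCut_ops[OF u v] same_RCut_ops[OF v u] eq by simp
qed

lemma tri_if_supp_eq:
  assumes u: "is_uf u" and v: "is_uf v" and eq: "supp u = supp v"
  shows "tri u v"
  using u
proof (cases rule: supp_cases)
  case (point x)
  then show ?thesis using supp_eq_Pt[OF v] eq idem_umin_umax_tri[OF u] by simp
qed (use same_LCut_ops[OF u v] same_RCut_ops[OF u v] eq in simp_all)

lemma supp_less_irrefl: "\<not> supp_less a a"
  by (cases a) auto

lemma supp_less_asym: "supp_less a b \<Longrightarrow> \<not> supp_less b a"
  by (cases a; cases b) auto

lemma ueq_iff_supp_eq:
  assumes u: "is_uf u" and v: "is_uf v"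
  shows "ueq u v \<longleftrightarrow> supp u = supp v"
  using u v
proof (cases rule: uf_trichotomy)
  case below
  then show ?thesis
    using separated_tri[OF u v] separated_supp_less[OF u v] supp_less_irrefl
    by (metis ueq_def)
next
  case same
  then show ?thesis using tri_if_supp_eq[OF u v] tri_if_supp_eq[OF v u] by (simp add: ueq_def)
next
  case above
  then show ?thesis
    using separated_tri[OF v u] separated_supp_less[OF v u] supp_less_irrefl
    by (metis ueq_def)
qed

lemma supp_umin_umax:
  assumes u: "is_uf u" and v: "is_uf v"
  shows "supp (umin u v) = smin (supp u) (supp v) \<and> supp (umax u v) = smax (supp u) (supp v)"
  using u v
proof (cases rule: uf_trichotomy)
  case below
  then show ?thesis
    using separated_ops[OF u v] separated_supp_less[OF u v] by (simp add: smin_def smax_def supp_le_def)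
next
  case same
  then show ?thesis
    by (cases rule: same_supp_cases[OF u v]) (simp_all add: smin_def smax_def)
next
  case above
  then have "\<not> supp_le (supp u) (supp v)"
    using separated_supp_less[OF v u] supp_less_asym supp_less_irrefl by (metis supp_le_def)
  then show ?thesis
    using separated_ops[OF v u] above by (simp add: smin_def smax_def)
qed

lemma tri_ueq_characterisations:
  assumes u: "is_uf u" and v: "is_uf v"
  shows "(tri u v \<longleftrightarrow> (umin u v = u \<or> umin v u = u))
    \<and> (tri u v \<longleftrightarrow> (umin u v = u \<or> umin u v \<noteq> umin v u))
    \<and> (tri u v \<longleftrightarrow> (umax u v = v \<or> umax v u = v))
    \<and> (tri u v \<longleftrightarrow> (umax u v = v \<or> umax u v \<noteq> umax v u))
    \<and> (ueq u v \<longleftrightarrow> (umin u v \<noteq> umin v u \<or> u = v))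
    \<and> (ueq u v \<longleftrightarrow> (umax u v \<noteq> umax v u \<or> u = v))"
  using u v
proof (cases rule: uf_trichotomy)
  case below
  with separated_ops[OF u v] separated_tri[OF u v] show ?thesis
    by (auto simp: ueq_def)
next
  case same
  with tri_if_supp_eq[OF u v] tri_if_supp_eq[OF v u] show ?thesis
    by (cases rule: same_supp_cases[OF u v]) (auto simp: ueq_def)
next
  case above
  with separated_ops[OF v u] separated_tri[OF v u] show ?thesis
    by (auto simp: ueq_def)
qed

lemma ueq_iff_relD:
  assumes u: "is_uf u" and v: "is_uf v"
  shows "ueq u v \<longleftrightarrow> relD u v"
  using u v
proof (cases rule: uf_trichotomy)
  case below
  with separated_ops[OF u v] separated_tri[OF u v] idem_umin_umax_tri[OF u] show ?thesis
    by (auto simp: ueq_def relD_def)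
next
  case same
  with tri_if_supp_eq[OF u v] tri_if_supp_eq[OF v u] idem_umin_umax_tri[OF u] idem_umin_umax_tri[OF v] show ?thesis
    by (cases rule: same_supp_cases[OF u v]) (auto simp: ueq_def relD_def)
next
  case above
  with separated_ops[OF v u] separated_tri[OF v u] idem_umin_umax_tri[OF v] show ?thesis
    by (auto simp: ueq_def relD_def)
qed

lemma kernel_is_congruence:
  assumes R: "\<And>x y. x \<in> B \<Longrightarrow> y \<in> B \<Longrightarrow> R x y \<longleftrightarrow> h x = h y"
    and f_closed: "\<And>x y. x \<in> B \<Longrightarrow> y \<in> B \<Longrightarrow> f x y \<in> B"
    and g_closed: "\<And>x y. x \<in> B \<Longrightarrow> y \<in> B \<Longrightarrow> g x y \<in> B"
    and f_hom: "\<And>x y. x \<in> B \<Longrightarrow> y \<in> B \<Longrightarrow> h (f x y) = F (h x) (h y)"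
    and g_hom: "\<And>x y. x \<in> B \<Longrightarrow> y \<in> B \<Longrightarrow> h (g x y) = G (h x) (h y)"
  shows "is_congruence B f g R"
  unfolding is_congruence_def
  by (intro conjI ballI impI) (simp_all add: R f_closed g_closed f_hom g_hom)

lemma ueq_congruence: "is_congruence (betaX :: 'a::linorder set set set) umax umin ueq"
  by (rule kernel_is_congruence[where h = supp and F = smax and G = smin])
    (simp_all add: mem_betaX ueq_iff_supp_eq supp_umin_umax is_uf_op_ext)

lemma ueq_class: "is_uf u \<Longrightarrow> {v \<in> betaX. ueq u v} = {v. is_uf v \<and> supp v = supp u}"
  by (auto simp: mem_betaX ueq_iff_supp_eq)

lemma ueq_class_principal:
  assumes u: "is_uf u" and "is_principal u"
  shows "{v \<in> betaX. ueq u v} = {u}"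
proof -
  obtain x where x: "u = principal_uf x" using assms(2) by (auto simp: is_principal_def)
  then show ?thesis
    unfolding ueq_class[OF u] using supp_eq_Pt by (auto simp: supp_principal is_uf_principal)
qed

lemma ueq_class_LCut_bands:
  assumes u: "is_uf u" and su: "supp u = LCut I"
  shows "left_zero_band {v \<in> betaX. ueq u v} umin \<and> right_zero_band {v \<in> betaX. ueq u v} umax"
proof -
  have "umin x y = x \<and> umax x y = y"
    if "x \<in> {v \<in> betaX. ueq u v}" "y \<in> {v \<in> betaX. ueq u v}" for x y
    using that same_LCut_ops[of x y I] su by (simp add: ueq_class[OF u])
  then show ?thesis by (simp add: left_zero_band_def right_zero_band_def)
qed

lemma ueq_class_RCut_bands:
  assumes u: "is_uf u" and su: "supp u = RCut J"
  shows "right_zero_band {v \<in> betaX. ueq u v} umin \<and> left_zero_band {v \<in> betaX. ueq u v} umax"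
proof -
  have "umin x y = y \<and> umax x y = x"
    if "x \<in> {v \<in> betaX. ueq u v}" "y \<in> {v \<in> betaX. ueq u v}" for x y
    using that same_RCut_ops[of x y J] su by (simp add: ueq_class[OF u])
  then show ?thesis by (simp add: left_zero_band_def right_zero_band_def)
qed

theorem corollary6:
  shows
  "(\<forall>u\<in>(betaX :: 'a::linorder set set set). \<forall>v\<in>betaX.
      (tri u v \<longleftrightarrow> (umin u v = u \<or> umin v u = u))
    \<and> (tri u v \<longleftrightarrow> (umin u v = u \<or> umin u v \<noteq> umin v u))
    \<and> (tri u v \<longleftrightarrow> (umax u v = v \<or> umax v u = v))
    \<and> (tri u v \<longleftrightarrow> (umax u v = v \<or> umax u v \<noteq> umax v u))
    \<and> (ueq u v \<longleftrightarrow> (umin u v \<noteq> umin v u \<or> u = v))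
    \<and> (ueq u v \<longleftrightarrow> (umax u v \<noteq> umax v u \<or> u = v)))
   \<and> is_congruence (betaX :: 'a set set set) umax umin ueq
   \<and> (\<forall>u\<in>(betaX :: 'a set set set). \<forall>v\<in>betaX. ueq u v \<longleftrightarrow> relD u v)
   \<and> (\<forall>u\<in>(betaX :: 'a set set set). \<forall>v\<in>betaX. ueq u v \<longleftrightarrow> supp u = supp v)
   \<and> (\<forall>u\<in>(betaX :: 'a set set set). \<forall>v\<in>betaX.
        supp (umin u v) = smin (supp u) (supp v)
      \<and> supp (umax u v) = smax (supp u) (supp v))
   \<and> (\<forall>u\<in>(betaX :: 'a set set set).
        (is_principal u \<longrightarrow> {v\<in>betaX. ueq u v} = {u})
      \<and> (\<not> is_principal u \<and> I_u u \<in> u \<longrightarrow>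
           left_zero_band {v\<in>betaX. ueq u v} umin \<and> right_zero_band {v\<in>betaX. ueq u v} umax)
      \<and> (\<not> is_principal u \<and> J_u u \<in> u \<longrightarrow>
           right_zero_band {v\<in>betaX. ueq u v} umin \<and> left_zero_band {v\<in>betaX. ueq u v} umax))"
proof (intro conjI ballI)
  show "is_congruence (betaX :: 'a set set set) umax umin ueq"
    by (rule ueq_congruence)
next
  fix u v :: "'a set set"
  assume "u \<in> betaX" "v \<in> betaX"
  then have u: "is_uf u" and v: "is_uf v" by (simp_all add: mem_betaX)
  note characterisations = tri_ueq_characterisations[OF u v]
  show "tri u v \<longleftrightarrow> (umin u v = u \<or> umin v u = u)" using characterisations by blast
  show "tri u v \<longleftrightarrow> (umin u v = u \<or> umin u v \<noteq> umin v u)" using characterisations by blast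
  show "tri u v \<longleftrightarrow> (umax u v = v \<or> umax v u = v)" using characterisations by blast
  show "tri u v \<longleftrightarrow> (umax u v = v \<or> umax u v \<noteq> umax v u)" using characterisations by blast
  show "ueq u v \<longleftrightarrow> (umin u v \<noteq> umin v u \<or> u = v)" using characterisations by blast
  show "ueq u v \<longleftrightarrow> (umax u v \<noteq> umax v u \<or> u = v)" using characterisations by blast
  show "ueq u v \<longleftrightarrow> relD u v" by (rule ueq_iff_relD[OF u v])
  show "ueq u v \<longleftrightarrow> supp u = supp v" by (rule ueq_iff_supp_eq[OF u v])
  show "supp (umin u v) = smin (supp u) (supp v)" using supp_umin_umax[OF u v] by blast
  show "supp (umax u v) = smax (supp u) (supp v)" using supp_umin_umax[OF u v] by blast
next
  fix u :: "'a set set"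
  assume "u \<in> betaX"
  then have u: "is_uf u" by (simp add: mem_betaX)
  show "is_principal u \<longrightarrow> {v\<in>betaX. ueq u v} = {u}"
    using ueq_class_principal[OF u] by blast
  show "\<not> is_principal u \<and> I_u u \<in> u \<longrightarrow>
      left_zero_band {v\<in>betaX. ueq u v} umin \<and> right_zero_band {v\<in>betaX. ueq u v} umax"
    using ueq_class_LCut_bands[OF u] by (simp add: supp_def)
  show "\<not> is_principal u \<and> J_u u \<in> u \<longrightarrow>
      right_zero_band {v\<in>betaX. ueq u v} umin \<and> left_zero_band {v\<in>betaX. ueq u v} umax"
    using ueq_class_RCut_bands[OF u] supp_if_J_u_mem[OF u] by blast
qed

end
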